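(* Let $F=f+\Psi$ on $\mathbf{R}^n$, where $\Psi:\mathbf{R}^n\to\mathbf{R}\cup\{+\infty\}$ is proper, convex and closed, and $f$ is differentiable with $\|\nabla f(x)-\nabla f(y)\|_2\le L\|x-y\|_2$ for all $x,y\in\operatorname{dom}\Psi$, for some $L>0$. Let $F^\star=\min_xF(x)$ (assumed attained). Suppose $F$ satisfies the weak gradient-mapping dominance condition with parameter $\omega>0$: \[ \|G_L(x)\|_2\ge\sqrt{2\omega}\,\bigl(F(T_L(x))-F^\star\bigr)\qquad\forall x\in\operatorname{dom}\Psi. \] Then the proximal gradient method $x^{(k+1)}=T_L(x^{(k)})$, started from any $x^{(0)}\in\operatorname{dom}\Psi$, satisfies for all $k\ge0$ \[ F(x^{(k)})-F^\star\le\max\Bigl\{\frac{4L}{\omega k},\ \Bigl(\frac{\sqrt2}{2}\Bigr)^k\bigl(F(x^{(0)})-F^\star\bigr)\Bigr\}, \] where $\frac{4L}{\omega k}$ is interpreted as $+\infty$ for $k=0$.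
   Context: For a convex function $\phi$, $\operatorname{prox}_\phi(x)=\arg\min_y\{\phi(y)+\tfrac12\|y-x\|_2^2\}$. Define $T_L(x)=\operatorname{prox}_{\frac1L\Psi}\bigl(x-\frac1L\nabla f(x)\bigr)$ and the gradient mapping $G_L(x)=L\bigl(x-T_L(x)\bigr)$. The proximal gradient method with constant step size $1/L$ is $x^{(k+1)}=T_L(x^{(k)})$. *)

theory Defs
  imports "HOL-Analysis.Analysis"
begin

text \<open>An extended-real-valued function Psi : R^n -> R \<union> {+inf} is represented by its
  effective domain D and its (real) values on D; Psi = +inf outside D.\<close>

definition proper_closed_convex :: "('a::real_normed_vector) set \<Rightarrow> ('a \<Rightarrow> real) \<Rightarrow> bool" where
  "proper_closed_convex D \<Psi> \<longleftrightarrow>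
     D \<noteq> {} \<and> convex D \<and> convex_on D \<Psi> \<and> closed {(x, t). x \<in> D \<and> \<Psi> x \<le> t}"

definition prox :: "real \<Rightarrow> ('a::real_normed_vector) set \<Rightarrow> ('a \<Rightarrow> real) \<Rightarrow> 'a \<Rightarrow> 'a" where
  "prox L D \<Psi> v = (THE y. y \<in> D \<and>
      (\<forall>z\<in>D. \<Psi> y / L + (norm (y - v))\<^sup>2 / 2 \<le> \<Psi> z / L + (norm (z - v))\<^sup>2 / 2))"

definition T_map :: "real \<Rightarrow> ('a::real_normed_vector) set \<Rightarrow> ('a \<Rightarrow> real) \<Rightarrow> ('a \<Rightarrow> 'a) \<Rightarrow> 'a \<Rightarrow> 'a" where
  "T_map L D \<Psi> gradf x = prox L D \<Psi> (x - (1 / L) *\<^sub>R gradf x)"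

definition G_map :: "real \<Rightarrow> ('a::real_normed_vector) set \<Rightarrow> ('a \<Rightarrow> real) \<Rightarrow> ('a \<Rightarrow> 'a) \<Rightarrow> 'a \<Rightarrow> 'a" where
  "G_map L D \<Psi> gradf x = L *\<^sub>R (x - T_map L D \<Psi> gradf x)"

end

(*
  The prox map is well defined: the objective \<Psi>/L + |. - v|^2/2 is 1-strongly convex, so it has
  at most one minimiser, and it attains its infimum on a sublevel set of the epigraph of \<Psi>, which
  is compact because a closed proper convex function has an affine minorant.

  By the descent lemma and strong convexity, one step decreases F = f + \<Psi> by at least
  (L/2) |x - T x|^2 = |G x|^2 / (2L), so with the dominance condition the gaps d_k = F(x_k) - F*
  satisfy d_(k+1) + (\<omega>/L) d_(k+1)^2 <= d_k. Hence at each step either d_(k+1) <= d_k / 2 or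
  1/d_(k+1) >= 1/d_k + \<omega>/(2L); after k steps one of the two has happened at least k/2 times,
  giving the linear bound (1/2)^(k/2) d_0 or the sublinear bound 4L/(\<omega> k).
*)

theory Submission
  imports Defs
begin

definition prox_objective :: "real \<Rightarrow> ('a::real_normed_vector \<Rightarrow> real) \<Rightarrow> 'a \<Rightarrow> 'a \<Rightarrow> real" where
  "prox_objective L \<Psi> v y = \<Psi> y / L + (norm (y - v))\<^sup>2 / 2"

lemma epigraph_proper_closed_convex:
  assumes "proper_closed_convex D \<Psi>"
  shows "convex (epigraph D \<Psi>)" and "closed (epigraph D \<Psi>)"
proof -
  show "convex (epigraph D \<Psi>)"
    using assms by (auto simp: proper_closed_convex_def intro: convex_epigraphI)
  have "epigraph D \<Psi> = {(x, t). x \<in> D \<and> \<Psi> x \<le> t}" by (auto simp: epigraph_def)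
  with assms show "closed (epigraph D \<Psi>)" by (simp add: proper_closed_convex_def)
qed

lemma proper_closed_convex_affine_minorant:
  fixes \<Psi> :: "'a::euclidean_space \<Rightarrow> real"
  assumes \<Psi>: "proper_closed_convex D \<Psi>"
  obtains w b where "\<And>x. x \<in> D \<Longrightarrow> w \<bullet> x + b \<le> \<Psi> x"
proof -
  obtain a where a: "a \<in> D" using \<Psi> by (auto simp: proper_closed_convex_def)
  have "(a, \<Psi> a - 1) \<notin> epigraph D \<Psi>" by (simp add: epigraph_def)
  then obtain p \<beta> where below: "p \<bullet> (a, \<Psi> a - 1) < \<beta>"
    and above: "\<And>q. q \<in> epigraph D \<Psi> \<Longrightarrow> \<beta> < p \<bullet> q"
    using separating_hyperplane_closed_point epigraph_proper_closed_convex[OF \<Psi>] by metis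
  obtain u s where p: "p = (u, s)" by fastforce
  have graph: "\<beta> < u \<bullet> x + s * \<Psi> x" if "x \<in> D" for x
    using above[of "(x, \<Psi> x)"] that by (simp add: p epigraph_def)
  have "s > 0" using below graph[OF a] by (simp add: p algebra_simps)
  show ?thesis
  proof
    fix x assume "x \<in> D"
    with graph[OF this] \<open>s > 0\<close> show "(- (1 / s) *\<^sub>R u) \<bullet> x + \<beta> / s \<le> \<Psi> x"
      by (simp add: field_simps)
  qed
qed

lemma square_le_affine_bound:
  fixes r \<alpha> \<beta> :: real
  assumes "r\<^sup>2 \<le> \<alpha> * r + \<beta>"
  shows "r \<le> \<bar>\<alpha>\<bar> + sqrt \<bar>\<beta>\<bar>"
proof (rule ccontr)
  assume "\<not> ?thesis"
  then have r: "\<bar>\<alpha>\<bar> + sqrt \<bar>\<beta>\<bar> < r" by simp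
  moreover have "0 \<le> \<bar>\<alpha>\<bar> + sqrt \<bar>\<beta>\<bar>" by simp
  ultimately have "0 < r" by linarith
  have "\<alpha> * r \<le> \<bar>\<alpha>\<bar> * r" using \<open>0 < r\<close> by (intro mult_right_mono) auto
  moreover have "\<beta> \<le> sqrt \<bar>\<beta>\<bar> * r"
  proof -
    have "\<beta> \<le> sqrt \<bar>\<beta>\<bar> * sqrt \<bar>\<beta>\<bar>" by simp
    also have "\<dots> \<le> sqrt \<bar>\<beta>\<bar> * r" using r \<open>0 < r\<close> by (intro mult_left_mono) auto
    finally show ?thesis .
  qed
  moreover have "(\<bar>\<alpha>\<bar> + sqrt \<bar>\<beta>\<bar>) * r < r * r"
    using r \<open>0 < r\<close> by (intro mult_strict_right_mono) auto
  ultimately show False using assms by (simp add: power2_eq_square algebra_simps)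
qed

lemma bounded_epigraph_sublevel:
  fixes \<Psi> :: "'a::euclidean_space \<Rightarrow> real"
  assumes \<Psi>: "proper_closed_convex D \<Psi>" and L: "L > 0"
  shows "bounded {p \<in> epigraph D \<Psi>. snd p / L + (norm (fst p - v))\<^sup>2 / 2 \<le> G}"
proof -
  obtain w b where minorant: "\<And>x. x \<in> D \<Longrightarrow> w \<bullet> x + b \<le> \<Psi> x"
    using proper_closed_convex_affine_minorant[OF \<Psi>] by blast
  define R where "R = 2 * norm w / L + sqrt \<bar>2 * (G - (b + w \<bullet> v) / L)\<bar>"
  have "{p \<in> epigraph D \<Psi>. snd p / L + (norm (fst p - v))\<^sup>2 / 2 \<le> G}
    \<subseteq> cball v R \<times> {w \<bullet> v - norm w * R + b .. L * G}"
  proof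
    fix p assume "p \<in> {p \<in> epigraph D \<Psi>. snd p / L + (norm (fst p - v))\<^sup>2 / 2 \<le> G}"
    moreover obtain y t where p: "p = (y, t)" by fastforce
    ultimately have y: "y \<in> D" and t: "\<Psi> y \<le> t" and level: "t / L + (norm (y - v))\<^sup>2 / 2 \<le> G"
      by (auto simp: epigraph_def)
    have "w \<bullet> (v - y) \<le> norm w * norm (y - v)"
      using norm_cauchy_schwarz[of w "v - y"] by (simp add: norm_minus_commute)
    then have lin: "w \<bullet> v - norm w * norm (y - v) \<le> w \<bullet> y" by (simp add: inner_diff_right)
    have upper: "t \<le> L * G - L * (norm (y - v))\<^sup>2 / 2"
      using level L by (simp add: field_simps)
    have "(norm (y - v))\<^sup>2 \<le> 2 * norm w / L * norm (y - v) + 2 * (G - (b + w \<bullet> v) / L)"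
      using minorant[OF y] t upper lin L by (simp add: field_simps)
    moreover have "\<bar>2 * norm w / L\<bar> = 2 * norm w / L" using L by simp
    ultimately have r: "norm (y - v) \<le> R"
      unfolding R_def using square_le_affine_bound by metis
    have "0 \<le> L * (norm (y - v))\<^sup>2 / 2" using L by simp
    with upper have "t \<le> L * G" by linarith
    moreover have "w \<bullet> v - norm w * R + b \<le> t"
      using lin minorant[OF y] t mult_left_mono[OF r, of "norm w"] by simp
    ultimately show "p \<in> cball v R \<times> {w \<bullet> v - norm w * R + b .. L * G}"
      using r p by (simp add: dist_norm norm_minus_commute)
  qed
  then show ?thesis
    by (rule bounded_subset[OF bounded_Times[OF bounded_cball bounded_closed_interval]])
qed

lemma prox_objective_attains_min:
  fixes \<Psi> :: "'a::euclidean_space \<Rightarrow> real"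
  assumes \<Psi>: "proper_closed_convex D \<Psi>" and L: "L > 0"
  shows "\<exists>y\<in>D. \<forall>z\<in>D. prox_objective L \<Psi> v y \<le> prox_objective L \<Psi> v z"
proof -
  obtain a where a: "a \<in> D" using \<Psi> by (auto simp: proper_closed_convex_def)
  define g where "g p = snd p / L + (norm (fst p - v))\<^sup>2 / 2" for p :: "'a \<times> real"
  define K where "K = {p \<in> epigraph D \<Psi>. g p \<le> g (a, \<Psi> a)}"
  have "bounded K"
    unfolding K_def g_def using bounded_epigraph_sublevel[OF \<Psi> L] .
  moreover have "closed K"
  proof -
    have "K = epigraph D \<Psi> \<inter> {p. g p \<le> g (a, \<Psi> a)}" by (auto simp: K_def)
    moreover have "closed {p. g p \<le> g (a, \<Psi> a)}"
      unfolding g_def using L by (intro closed_Collect_le continuous_intros) auto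
    ultimately show ?thesis using epigraph_proper_closed_convex(2)[OF \<Psi>] by auto
  qed
  ultimately have "compact K" by (simp add: compact_eq_bounded_closed)
  moreover have "(a, \<Psi> a) \<in> K" using a by (simp add: K_def epigraph_def)
  moreover have "continuous_on K g" unfolding g_def using L by (intro continuous_intros) auto
  ultimately obtain y t where "(y, t) \<in> K" and min: "\<And>q. q \<in> K \<Longrightarrow> g (y, t) \<le> g q"
    using continuous_attains_inf[of K g] by fastforce
  then have y: "y \<in> D" and t: "\<Psi> y \<le> t" by (auto simp: K_def epigraph_def)
  have "prox_objective L \<Psi> v y \<le> prox_objective L \<Psi> v z" if z: "z \<in> D" for z
  proof -
    have "prox_objective L \<Psi> v y \<le> g (y, t)"
      using t L by (simp add: prox_objective_def g_def divide_right_mono)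
    also have "g (y, t) \<le> g (z, \<Psi> z)"
    proof (cases "(z, \<Psi> z) \<in> K")
      case False
      then have "g (a, \<Psi> a) < g (z, \<Psi> z)" using z by (auto simp: K_def epigraph_def)
      with min[OF \<open>(a, \<Psi> a) \<in> K\<close>] show ?thesis by simp
    qed (rule min)
    also have "g (z, \<Psi> z) = prox_objective L \<Psi> v z" by (simp add: g_def prox_objective_def)
    finally show ?thesis .
  qed
  with y show ?thesis by blast
qed

lemma power2_norm_convex_combination:
  fixes a b v :: "'a::real_inner"
  shows "(norm ((1 - t) *\<^sub>R a + t *\<^sub>R b - v))\<^sup>2
       = (1 - t) * (norm (a - v))\<^sup>2 + t * (norm (b - v))\<^sup>2 - t * (1 - t) * (norm (a - b))\<^sup>2"
proof -
  have "(1 - t) *\<^sub>R a + t *\<^sub>R b - v = (1 - t) *\<^sub>R (a - v) + t *\<^sub>R (b - v)"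
    and "a - b = (a - v) - (b - v)"
    by (simp_all add: algebra_simps)
  then show ?thesis
    unfolding power2_norm_eq_inner
    by (simp add: inner_add_left inner_add_right inner_diff_left inner_diff_right
        inner_commute[of "b - v"] algebra_simps)
qed

lemma prox_objective_strongly_convex:
  fixes \<Psi> :: "'a::real_inner \<Rightarrow> real"
  assumes \<Psi>: "convex_on D \<Psi>" and L: "L > 0" and "a \<in> D" "b \<in> D" and t: "0 \<le> t" "t \<le> 1"
  shows "prox_objective L \<Psi> v ((1 - t) *\<^sub>R a + t *\<^sub>R b)
    \<le> (1 - t) * prox_objective L \<Psi> v a + t * prox_objective L \<Psi> v b
       - t * (1 - t) / 2 * (norm (a - b))\<^sup>2"
proof -
  have "\<Psi> ((1 - t) *\<^sub>R a + t *\<^sub>R b) / L \<le> ((1 - t) * \<Psi> a + t * \<Psi> b) / L"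
    using convex_onD[OF \<Psi> t assms(3,4)] L by (simp add: divide_right_mono)
  also have "\<dots> = (1 - t) * (\<Psi> a / L) + t * (\<Psi> b / L)" by (simp add: add_divide_distrib)
  finally have "\<Psi> ((1 - t) *\<^sub>R a + t *\<^sub>R b) / L \<le> (1 - t) * (\<Psi> a / L) + t * (\<Psi> b / L)" .
  moreover have "(1 - t) * (\<Psi> a / L + (norm (a - v))\<^sup>2 / 2) + t * (\<Psi> b / L + (norm (b - v))\<^sup>2 / 2)
      - t * (1 - t) / 2 * (norm (a - b))\<^sup>2
    = (1 - t) * (\<Psi> a / L) + t * (\<Psi> b / L)
      + ((1 - t) * (norm (a - v))\<^sup>2 + t * (norm (b - v))\<^sup>2 - t * (1 - t) * (norm (a - b))\<^sup>2) / 2"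
    by (simp add: algebra_simps add_divide_distrib diff_divide_distrib)
  ultimately show ?thesis
    unfolding prox_objective_def power2_norm_convex_combination by linarith
qed

lemma prox_objective_quadratic_growth:
  fixes \<Psi> :: "'a::real_inner \<Rightarrow> real"
  assumes \<Psi>: "convex_on D \<Psi>" and L: "L > 0" and y: "y \<in> D"
    and min: "\<forall>z\<in>D. prox_objective L \<Psi> v y \<le> prox_objective L \<Psi> v z"
    and z: "z \<in> D"
  shows "prox_objective L \<Psi> v y + (norm (z - y))\<^sup>2 / 2 \<le> prox_objective L \<Psi> v z"
proof -
  let ?h = "prox_objective L \<Psi> v" and ?d = "(norm (z - y))\<^sup>2"
  have segment: "?h y \<le> ?h z - (1 - t) * ?d / 2" if t: "t \<in> {0<..<1}" for t
  proof -
    have "(1 - t) *\<^sub>R y + t *\<^sub>R z \<in> D"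
      using convexD_alt[OF convex_on_imp_convex[OF \<Psi>] y z] t by simp
    then have "?h y \<le> ?h ((1 - t) *\<^sub>R y + t *\<^sub>R z)" using min by blast
    also have "\<dots> \<le> (1 - t) * ?h y + t * ?h z - t * (1 - t) / 2 * ?d"
      using prox_objective_strongly_convex[OF \<Psi> L y z, of t v] t
      by (simp add: norm_minus_commute)
    finally have "t * ?h y \<le> t * (?h z - (1 - t) * ?d / 2)" by (simp add: algebra_simps)
    then show ?thesis using t by simp
  qed
  have "((\<lambda>t. ?h z - (1 - t) * ?d / 2) \<longlongrightarrow> ?h z - ?d / 2) (at_right 0)"
    by (auto intro!: tendsto_eq_intros)
  moreover have "eventually (\<lambda>t. ?h y \<le> ?h z - (1 - t) * ?d / 2) (at_right 0)"
    by (intro eventually_mono[OF eventually_at_right_real[OF zero_less_one]] segment)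
  ultimately have "?h y \<le> ?h z - ?d / 2" by (rule tendsto_lowerbound) simp
  then show ?thesis by simp
qed

lemma prox_minimises:
  fixes \<Psi> :: "'a::euclidean_space \<Rightarrow> real"
  assumes \<Psi>: "proper_closed_convex D \<Psi>" and L: "L > 0"
  shows "prox L D \<Psi> v \<in> D \<and>
    (\<forall>z\<in>D. prox_objective L \<Psi> v (prox L D \<Psi> v) \<le> prox_objective L \<Psi> v z)"
proof -
  have convex: "convex_on D \<Psi>" using \<Psi> by (simp add: proper_closed_convex_def)
  let ?minimiser = "\<lambda>y. y \<in> D \<and> (\<forall>z\<in>D. prox_objective L \<Psi> v y \<le> prox_objective L \<Psi> v z)"
  have "\<exists>!y. ?minimiser y"
  proof (rule ex_ex1I)
    show "\<exists>y. ?minimiser y" using prox_objective_attains_min[OF \<Psi> L] by blast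
  next
    fix y y' assume y: "?minimiser y" and y': "?minimiser y'"
    then have "prox_objective L \<Psi> v y + (norm (y' - y))\<^sup>2 / 2 \<le> prox_objective L \<Psi> v y'"
      and "prox_objective L \<Psi> v y' \<le> prox_objective L \<Psi> v y"
      using prox_objective_quadratic_growth[OF convex L] by blast+
    then have "(norm (y' - y))\<^sup>2 \<le> 0" by linarith
    then show "y = y'" by simp
  qed
  then show ?thesis
    unfolding prox_def prox_objective_def[symmetric] by (rule theI')
qed

lemma descent_lemma:
  fixes f :: "'a::real_inner \<Rightarrow> real"
  assumes grad: "\<And>x. (f has_derivative (\<lambda>h. gradf x \<bullet> h)) (at x)"
    and D: "convex D"
    and Lip: "\<And>x y. x \<in> D \<Longrightarrow> y \<in> D \<Longrightarrow> norm (gradf x - gradf y) \<le> L * norm (x - y)"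
    and x: "x \<in> D" and y: "y \<in> D"
  shows "f y \<le> f x + gradf x \<bullet> (y - x) + L / 2 * (norm (y - x))\<^sup>2"
proof -
  define u where "u = y - x"
  define \<phi> where "\<phi> t = f (x + t *\<^sub>R u) - t * (gradf x \<bullet> u) - L / 2 * t\<^sup>2 * (norm u)\<^sup>2" for t
  have "((\<lambda>t. f (x + t *\<^sub>R u)) has_real_derivative gradf (x + t *\<^sub>R u) \<bullet> u) (at t)" for t
  proof -
    have "((\<lambda>t. f (x + t *\<^sub>R u)) has_derivative (\<lambda>s. gradf (x + t *\<^sub>R u) \<bullet> (s *\<^sub>R u))) (at t)"
      by (rule has_derivative_compose[OF _ grad]) (auto intro!: derivative_eq_intros)
    moreover have "(\<lambda>s. gradf (x + t *\<^sub>R u) \<bullet> (s *\<^sub>R u)) = (*) (gradf (x + t *\<^sub>R u) \<bullet> u)"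
      by (simp add: fun_eq_iff)
    ultimately show ?thesis by (simp add: has_field_derivative_def)
  qed
  then have \<phi>': "(\<phi> has_real_derivative
      gradf (x + t *\<^sub>R u) \<bullet> u - gradf x \<bullet> u - L * t * (norm u)\<^sup>2) (at t)" for t
    unfolding \<phi>_def by (auto intro!: derivative_eq_intros simp: power2_eq_square algebra_simps)
  have "gradf (x + t *\<^sub>R u) \<bullet> u - gradf x \<bullet> u - L * t * (norm u)\<^sup>2 \<le> 0"
    if t: "0 \<le> t" "t \<le> 1" for t
  proof -
    have "x + t *\<^sub>R u \<in> D" using convexD_alt[OF D x y t] by (simp add: u_def algebra_simps)
    have "gradf (x + t *\<^sub>R u) \<bullet> u - gradf x \<bullet> u = (gradf (x + t *\<^sub>R u) - gradf x) \<bullet> u"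
      by (simp add: inner_diff_left)
    also have "\<dots> \<le> norm (gradf (x + t *\<^sub>R u) - gradf x) * norm u" by (rule norm_cauchy_schwarz)
    also have "\<dots> \<le> L * norm (t *\<^sub>R u) * norm u"
      using Lip[OF \<open>x + t *\<^sub>R u \<in> D\<close> x] by (simp add: mult_right_mono)
    also have "\<dots> = L * t * (norm u)\<^sup>2" using t by (simp add: power2_eq_square)
    finally show ?thesis by simp
  qed
  then have "\<phi> 1 \<le> \<phi> 0"
    using DERIV_nonpos_imp_nonincreasing[of 0 1 \<phi>] \<phi>' by fastforce
  then show ?thesis by (simp add: \<phi>_def u_def)
qed

lemma prox_grad_sufficient_decrease:
  fixes f \<Psi> :: "'a::euclidean_space \<Rightarrow> real"
  assumes \<Psi>: "proper_closed_convex D \<Psi>"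
    and grad: "\<And>x. (f has_derivative (\<lambda>h. gradf x \<bullet> h)) (at x)"
    and L: "L > 0"
    and Lip: "\<And>x y. x \<in> D \<Longrightarrow> y \<in> D \<Longrightarrow> norm (gradf x - gradf y) \<le> L * norm (x - y)"
    and x: "x \<in> D"
  defines "y \<equiv> T_map L D \<Psi> gradf x"
  shows "y \<in> D" and "f y + \<Psi> y \<le> f x + \<Psi> x - L / 2 * (norm (x - y))\<^sup>2"
proof -
  define g where "g = gradf x"
  define v where "v = x - (1 / L) *\<^sub>R g"
  have "y = prox L D \<Psi> v" by (simp add: y_def T_map_def v_def g_def)
  then have y: "y \<in> D" and min: "\<forall>z\<in>D. prox_objective L \<Psi> v y \<le> prox_objective L \<Psi> v z"
    using prox_minimises[OF \<Psi> L, of v] by auto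
  then show "y \<in> D" by simp
  have convex: "convex_on D \<Psi>" using \<Psi> by (simp add: proper_closed_convex_def)
  have "L * prox_objective L \<Psi> v y + L * ((norm (x - y))\<^sup>2 / 2) \<le> L * prox_objective L \<Psi> v x"
    using mult_left_mono[OF prox_objective_quadratic_growth[OF convex L y min x], of L] L
    by (simp add: distrib_left)
  moreover have "L * prox_objective L \<Psi> v z = \<Psi> z + L * (norm (z - v))\<^sup>2 / 2" for z
    using L by (simp add: prox_objective_def field_simps)
  ultimately have growth:
    "\<Psi> y + L * (norm (y - v))\<^sup>2 / 2 + L * (norm (y - x))\<^sup>2 / 2 \<le> \<Psi> x + L * (norm (x - v))\<^sup>2 / 2"
    by (simp add: norm_minus_commute)
  have "(norm (y - v))\<^sup>2 = (norm (y - x))\<^sup>2 + 2 * ((y - x) \<bullet> (x - v)) + (norm (x - v))\<^sup>2"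
    using dot_norm[of "y - x" "x - v"] by simp
  then have "L * (norm (y - v))\<^sup>2
      = L * (norm (y - x))\<^sup>2 + 2 * (L * ((y - x) \<bullet> (x - v))) + L * (norm (x - v))\<^sup>2"
    by (simp only: distrib_left mult.left_commute)
  also have "L * ((y - x) \<bullet> (x - v)) = g \<bullet> (y - x)"
    using L by (simp add: v_def inner_commute)
  finally have "L * (norm (y - v))\<^sup>2 = L * (norm (y - x))\<^sup>2 + 2 * (g \<bullet> (y - x)) + L * (norm (x - v))\<^sup>2" .
  with growth have "\<Psi> y + g \<bullet> (y - x) + L * (norm (y - x))\<^sup>2 \<le> \<Psi> x" by linarith
  moreover have "f y \<le> f x + g \<bullet> (y - x) + L / 2 * (norm (y - x))\<^sup>2"
    unfolding g_def using descent_lemma[OF grad convex_on_imp_convex[OF convex] Lip x y] .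
  ultimately show "f y + \<Psi> y \<le> f x + \<Psi> x - L / 2 * (norm (x - y))\<^sup>2"
    by (simp add: norm_minus_commute)
qed

lemma prox_grad_gap_decrease:
  fixes f \<Psi> :: "'a::euclidean_space \<Rightarrow> real" and gradf :: "'a \<Rightarrow> 'a" and x :: 'a
    and D :: "'a set" and L :: real
  defines "y \<equiv> T_map L D \<Psi> gradf x"
  assumes \<Psi>: "proper_closed_convex D \<Psi>"
    and grad: "\<And>x. (f has_derivative (\<lambda>h. gradf x \<bullet> h)) (at x)"
    and L: "L > 0"
    and Lip: "\<And>x y. x \<in> D \<Longrightarrow> y \<in> D \<Longrightarrow> norm (gradf x - gradf y) \<le> L * norm (x - y)"
    and x: "x \<in> D"
    and \<omega>: "\<omega> \<ge> 0"
    and lower: "Fstar \<le> f y + \<Psi> y"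
    and dominance: "sqrt (2 * \<omega>) * (f y + \<Psi> y - Fstar) \<le> norm (G_map L D \<Psi> gradf x)"
  shows "\<omega> / L * (f y + \<Psi> y - Fstar)\<^sup>2 \<le> (f x + \<Psi> x - Fstar) - (f y + \<Psi> y - Fstar)"
proof -
  define n where "n = norm (x - y)"
  have decrease: "f y + \<Psi> y \<le> f x + \<Psi> x - L / 2 * n\<^sup>2"
    unfolding n_def y_def using prox_grad_sufficient_decrease(2)[OF \<Psi> grad L Lip x] .
  have "norm (G_map L D \<Psi> gradf x) = L * n"
    using L by (simp add: G_map_def n_def y_def)
  with dominance have "(sqrt (2 * \<omega>) * (f y + \<Psi> y - Fstar))\<^sup>2 \<le> (L * n)\<^sup>2"
    using lower \<omega> by (intro power_mono) auto
  then have "2 * \<omega> * (f y + \<Psi> y - Fstar)\<^sup>2 \<le> L\<^sup>2 * n\<^sup>2"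
    using \<omega> by (simp add: power_mult_distrib)
  then have "2 * \<omega> * (f y + \<Psi> y - Fstar)\<^sup>2 / (2 * L) \<le> L\<^sup>2 * n\<^sup>2 / (2 * L)"
    using L by (intro divide_right_mono) auto
  moreover have "2 * \<omega> * (f y + \<Psi> y - Fstar)\<^sup>2 / (2 * L) = \<omega> / L * (f y + \<Psi> y - Fstar)\<^sup>2"
    and "L\<^sup>2 * n\<^sup>2 / (2 * L) = L / 2 * n\<^sup>2"
    using L by (simp_all add: power2_eq_square)
  ultimately have "\<omega> / L * (f y + \<Psi> y - Fstar)\<^sup>2 \<le> L / 2 * n\<^sup>2" by simp
  with decrease show ?thesis by linarith
qed

lemma gap_rate_invariant_step:
  fixes c d d' d0 :: real and a b :: nat
  assumes c: "c > 0" and d': "d' \<ge> 0" and dec: "c * d'\<^sup>2 \<le> d - d'"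
    and linear: "d \<le> (1 / 2) ^ b * d0" and sublinear: "real a * c * d \<le> 2"
  shows "\<exists>a' b'. a' + b' = Suc (a + b) \<and> d' \<le> (1 / 2) ^ b' * d0 \<and> real a' * c * d' \<le> 2"
proof (cases "d \<le> 2 * d'")
  case True
  \<comment> \<open>no halving, and then 1 / d' \<ge> 1 / d + c / 2\<close>
  have "d' \<le> d" using dec c by (smt (verit) mult_nonneg_nonneg zero_le_power2)
  have "c * d' * d \<le> c * d' * (2 * d')" using True c d' by (simp add: mult_left_mono)
  then have "d' * (2 + c * d) \<le> 2 * d" using dec by (simp add: power2_eq_square algebra_simps)
  then have "(real a + 1) * c * (d' * (2 + c * d)) \<le> (real a + 1) * c * (2 * d)"
    using c by (simp add: mult_left_mono)
  also have "\<dots> \<le> 2 * (2 + c * d)" using sublinear by (simp add: algebra_simps)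
  finally have "((real a + 1) * c * d') * (2 + c * d) \<le> 2 * (2 + c * d)" by (simp add: algebra_simps)
  moreover have "2 + c * d > 0" using c d' \<open>d' \<le> d\<close> by (smt (verit) mult_nonneg_nonneg)
  ultimately have "(real a + 1) * c * d' \<le> 2" by (metis mult_le_cancel_right_pos)
  then have "real (Suc a) * c * d' \<le> 2" by (simp add: add.commute)
  moreover have "d' \<le> (1 / 2) ^ b * d0" using \<open>d' \<le> d\<close> linear by linarith
  ultimately show ?thesis by (intro exI[of _ "Suc a"] exI[of _ b]) simp
next
  case False
  then have "d' \<le> (1 / 2) ^ Suc b * d0" using linear by simp
  moreover have "real a * c * d' \<le> real a * c * d" using False d' c by (simp add: mult_left_mono)
  ultimately show ?thesis using sublinear by (intro exI[of _ a] exI[of _ "Suc b"]) simp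
qed

lemma gap_rate:
  fixes \<delta> :: "nat \<Rightarrow> real"
  assumes c: "c > 0" and nonneg: "\<And>k. \<delta> k \<ge> 0"
    and dec: "\<And>k. c * (\<delta> (Suc k))\<^sup>2 \<le> \<delta> k - \<delta> (Suc k)"
    and k: "k > 0"
  shows "\<delta> k \<le> max (4 / (c * real k)) ((sqrt 2 / 2) ^ k * \<delta> 0)"
proof -
  have "\<exists>a b. a + b = k \<and> \<delta> k \<le> (1 / 2) ^ b * \<delta> 0 \<and> real a * c * \<delta> k \<le> 2" for k
  proof (induction k)
    case (Suc k)
    then obtain a b where "a + b = k" "\<delta> k \<le> (1 / 2) ^ b * \<delta> 0" "real a * c * \<delta> k \<le> 2"
      by blast
    with gap_rate_invariant_step[OF c nonneg dec] show ?case by metis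
  qed simp
  then obtain a b where ab: "a + b = k"
    and linear: "\<delta> k \<le> (1 / 2) ^ b * \<delta> 0" and sublinear: "real a * c * \<delta> k \<le> 2"
    by blast
  show ?thesis
  proof (cases "k \<le> 2 * a")
    case True
    have "\<delta> k * (c * real k) \<le> \<delta> k * (c * (2 * real a))"
      using True nonneg[of k] c by (intro mult_left_mono) auto
    also have "\<dots> \<le> 4" using sublinear by (simp add: algebra_simps)
    finally have "\<delta> k \<le> 4 / (c * real k)" using k c by (simp add: pos_le_divide_eq)
    then show ?thesis by simp
  next
    case False
    then have "k \<le> 2 * b" using ab by simp
    have "(1 / 2 :: real) ^ b = (sqrt 2 / 2) ^ (2 * b)" by (simp add: power_mult power_divide)
    also have "\<dots> \<le> (sqrt 2 / 2) ^ k"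
      using \<open>k \<le> 2 * b\<close> by (rule power_decreasing) (use sqrt2_less_2 in auto)
    finally have "(1 / 2) ^ b * \<delta> 0 \<le> (sqrt 2 / 2) ^ k * \<delta> 0"
      using nonneg[of 0] by (simp add: mult_right_mono)
    then show ?thesis using linear by simp
  qed
qed

theorem theorem4:
  fixes f \<Psi> :: "real ^ 'n \<Rightarrow> real"
    and gradf :: "real ^ 'n \<Rightarrow> real ^ 'n"
    and D :: "(real ^ 'n) set"
    and L \<omega> Fstar :: real
    and x0 :: "real ^ 'n"
  assumes Psi: "proper_closed_convex D \<Psi>"
    and grad: "\<And>x. (f has_derivative (\<lambda>h. gradf x \<bullet> h)) (at x)"
    and Lpos: "L > 0"
    and Lip: "\<And>x y. x \<in> D \<Longrightarrow> y \<in> D \<Longrightarrow> norm (gradf x - gradf y) \<le> L * norm (x - y)"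
    and attained: "\<exists>xs\<in>D. f xs + \<Psi> xs = Fstar \<and> (\<forall>x\<in>D. Fstar \<le> f x + \<Psi> x)"
    and omega: "\<omega> > 0"
    and dominance: "\<And>x. x \<in> D \<Longrightarrow>
        norm (G_map L D \<Psi> gradf x)
          \<ge> sqrt (2 * \<omega>) * (f (T_map L D \<Psi> gradf x) + \<Psi> (T_map L D \<Psi> gradf x) - Fstar)"
    and x0: "x0 \<in> D"
  shows "\<forall>k::nat. k > 0 \<longrightarrow>
     f ((T_map L D \<Psi> gradf ^^ k) x0) + \<Psi> ((T_map L D \<Psi> gradf ^^ k) x0) - Fstar
       \<le> max (4 * L / (\<omega> * real k)) ((sqrt 2 / 2) ^ k * (f x0 + \<Psi> x0 - Fstar))"
proof (intro allI impI)
  fix k :: nat assume k: "k > 0"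
  define T where "T = T_map L D \<Psi> gradf"
  define \<delta> where "\<delta> j = f ((T ^^ j) x0) + \<Psi> ((T ^^ j) x0) - Fstar" for j
  have iterate: "(T ^^ j) x0 \<in> D" for j
    by (induction j) (simp_all add: x0 T_def prox_grad_sufficient_decrease(1)[OF Psi grad Lpos Lip])
  have lower: "Fstar \<le> f ((T ^^ j) x0) + \<Psi> ((T ^^ j) x0)" for j
    using attained iterate by blast
  have "\<omega> / L * (\<delta> (Suc j))\<^sup>2 \<le> \<delta> j - \<delta> (Suc j)" for j
    using prox_grad_gap_decrease[OF Psi grad Lpos Lip iterate[of j] less_imp_le[OF omega]]
      lower[of "Suc j"] dominance[OF iterate[of j]]
    by (simp add: \<delta>_def T_def)
  moreover have "\<delta> j \<ge> 0" for j using lower[of j] by (simp add: \<delta>_def)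
  ultimately have "\<delta> k \<le> max (4 / (\<omega> / L * real k)) ((sqrt 2 / 2) ^ k * \<delta> 0)"
    using gap_rate[of "\<omega> / L" \<delta> k] omega Lpos k by simp
  then show "\<delta> k \<le> max (4 * L / (\<omega> * real k)) ((sqrt 2 / 2) ^ k * (f x0 + \<Psi> x0 - Fstar))"
    by (simp add: \<delta>_def)
qed

end
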